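(* Let $\Omega\subset\mathbb{R}^{n+1}$ be a compact convex body with $C^1$ boundary, fix $\Theta\in[\frac12,1)$ and let $r_\Theta>0$ satisfy $\omega_\Omega(r_\Theta)<\sqrt{2-2\Theta}$. Fix $X_0\in\partial\Omega$, choose orthonormal coordinates with $\mathcal{N}_\Omega(X_0)=e_{n+1}$, let $x_0\in\mathbb{R}^n$ be the first $n$ coordinates of $X_0$, and let $\beta_{X_0}:\Omega_{X_0}\to\mathbb{R}$ be the concave function whose graph is $\partial\Omega^+(X_0)$. Then for every $x_1\in B^n_{r_\Theta/4}(x_0)$ and every $x_2\in\Omega_{X_0}$, $$|\beta_{X_0}(x_1)-\beta_{X_0}(x_2)|\le\frac{4\,\mathrm{diam}(\Omega)}{r_\Theta}|x_1-x_2|.$$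
   Context: $\mathcal{N}_\Omega(X)$ is the outward unit normal at $X\in\partial\Omega$; $\omega_\Omega(r):=\sup\{|\mathcal{N}_\Omega(X_1)-\mathcal{N}_\Omega(X_2)|: X_1,X_2\in\partial\Omega,|X_1-X_2|<r\}$. $\partial\Omega^+(X_0):=\{X\in\partial\Omega\mid\langle\mathcal{N}_\Omega(X),\mathcal{N}_\Omega(X_0)\rangle>0\}$. In coordinates where $\mathcal{N}_\Omega(X_0)=e_{n+1}$, the orthogonal projection of $\partial\Omega^+(X_0)$ to $\mathbb{R}^n$ (the first $n$ coordinates) is an open bounded convex set $\Omega_{X_0}$, and $\partial\Omega^+(X_0)=\{(x,\beta_{X_0}(x)):x\in\Omega_{X_0}\}$ for a $C^1$ concave function $\beta_{X_0}$. *)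

theory Defs
  imports "HOL-Analysis.Analysis"
begin

text \<open>Ambient space R^(n+1) is modelled as the Euclidean space (real^'n) \<times> real
  (first n coordinates, last coordinate).\<close>

definition convex_body :: "'a::euclidean_space set \<Rightarrow> bool" where
  "convex_body \<Omega> \<longleftrightarrow> compact \<Omega> \<and> convex \<Omega> \<and> interior \<Omega> \<noteq> {}"

definition local_C1_defining ::
  "'a::euclidean_space set \<Rightarrow> 'a set \<Rightarrow> ('a \<Rightarrow> real) \<Rightarrow> ('a \<Rightarrow> 'a) \<Rightarrow> bool" where
  "local_C1_defining \<Omega> U \<rho> G \<longleftrightarrow>
     open U \<and>
     (\<forall>Y\<in>U. (\<rho> has_derivative (\<lambda>h. G Y \<bullet> h)) (at Y)) \<and>
     continuous_on U G \<and>
     \<Omega> \<inter> U = {Y\<in>U. \<rho> Y \<le> 0} \<and>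
     (\<forall>Y\<in>U \<inter> frontier \<Omega>. G Y \<noteq> 0)"

definition C1_boundary :: "'a::euclidean_space set \<Rightarrow> bool" where
  "C1_boundary \<Omega> \<longleftrightarrow>
     (\<forall>X\<in>frontier \<Omega>. \<exists>U \<rho> G. X \<in> U \<and> local_C1_defining \<Omega> U \<rho> G)"

definition outward_normal :: "'a::euclidean_space set \<Rightarrow> 'a \<Rightarrow> 'a" where
  "outward_normal \<Omega> X =
     (THE \<nu>. \<exists>U \<rho> G. X \<in> U \<and> local_C1_defining \<Omega> U \<rho> G \<and> \<nu> = G X /\<^sub>R norm (G X))"

definition normal_modulus :: "'a::euclidean_space set \<Rightarrow> real \<Rightarrow> real" where
  "normal_modulus \<Omega> r =
     Sup {norm (outward_normal \<Omega> X1 - outward_normal \<Omega> X2) | X1 X2.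
            X1 \<in> frontier \<Omega> \<and> X2 \<in> frontier \<Omega> \<and> norm (X1 - X2) < r}"

definition upper_boundary :: "'a::euclidean_space set \<Rightarrow> 'a \<Rightarrow> 'a set" where
  "upper_boundary \<Omega> X0 =
     {X \<in> frontier \<Omega>. outward_normal \<Omega> X \<bullet> outward_normal \<Omega> X0 > 0}"

text \<open>Given orthonormal coordinates Q (an orthogonal transformation of R^(n+1) =
  (real^'n) \<times> real), the projection of the upper boundary onto the first n
  coordinates, and the function beta whose graph is the upper boundary.\<close>
definition proj_domain ::
  "((real^'n) \<times> real) set \<Rightarrow> ((real^'n) \<times> real \<Rightarrow> (real^'n) \<times> real)
     \<Rightarrow> (real^'n) \<times> real \<Rightarrow> (real^'n) set" where
  "proj_domain \<Omega> Q X0 = fst ` Q ` upper_boundary \<Omega> X0"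

definition graph_fun ::
  "((real^'n) \<times> real) set \<Rightarrow> ((real^'n) \<times> real \<Rightarrow> (real^'n) \<times> real)
     \<Rightarrow> (real^'n) \<times> real \<Rightarrow> real^'n \<Rightarrow> real" where
  "graph_fun \<Omega> Q X0 x = (THE t. (x, t) \<in> Q ` upper_boundary \<Omega> X0)"

end

theory Submission
  imports Defs
begin

text \<open>For a convex body with C1 boundary the outward normal at a boundary point is the unique
  outer unit normal of a supporting hyperplane there. In the rotated coordinates the hypothesis
  on the modulus of continuity says that every boundary point within distance r of X0 has a normal
  whose last coordinate exceeds \<Theta> \<ge> 1/2; the supporting hyperplane at such a point bounds the
  slope of the upper boundary by sqrt 3. Projecting onto \<Omega> a point of the downward cone
  t \<le> t0 - sqrt 3 |x - x0| over the ball of radius r/2 shows that this cone lies in \<Omega>; hence over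
  that ball the upper boundary stays within distance r of X0, and is sqrt 3-Lipschitz there.
  For x1 in the ball of radius r/4 and |x1 - x2| < r/4 this gives the claim, because the cone also
  forces diam \<Omega> \<ge> sqrt 3 r/4; for |x1 - x2| \<ge> r/4 the difference of heights is at most
  diam \<Omega>.\<close>

definition unit_outer_normal :: "'a::real_inner set \<Rightarrow> 'a \<Rightarrow> 'a \<Rightarrow> bool" where
  "unit_outer_normal S X v \<longleftrightarrow> norm v = 1 \<and> (\<forall>Y\<in>S. v \<bullet> (Y - X) \<le> 0)"

lemma norm_diff_unit_vectors_sq:
  fixes u v :: "'a::real_inner"
  assumes "norm u = 1" "norm v = 1"
  shows "(norm (u - v))\<^sup>2 = 2 - 2 * (u \<bullet> v)"
  using assms by (simp add: power2_norm_eq_inner inner_diff_left inner_diff_right inner_commute[of v u]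
      norm_eq_1)

lemma local_C1_defining_mem_iff:
  assumes "local_C1_defining \<Omega> U \<rho> G" "Y \<in> U"
  shows "Y \<in> \<Omega> \<longleftrightarrow> \<rho> Y \<le> 0"
proof -
  have "\<Omega> \<inter> U = {Y\<in>U. \<rho> Y \<le> 0}" using assms(1) unfolding local_C1_defining_def by (elim conjE)
  then show ?thesis using assms(2) unfolding set_eq_iff by blast
qed

lemma local_C1_defining_frontier_zero:
  assumes "closed \<Omega>" and D: "local_C1_defining \<Omega> U \<rho> G" and "X \<in> U" "X \<in> frontier \<Omega>"
  shows "\<rho> X = 0"
proof (rule ccontr)
  have U: "open U"
    and der: "\<And>Y. Y \<in> U \<Longrightarrow> (\<rho> has_derivative (\<lambda>h. G Y \<bullet> h)) (at Y)"
    using D unfolding local_C1_defining_def by auto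
  have "continuous_on U \<rho>"
    by (intro continuous_at_imp_continuous_on ballI has_derivative_continuous[OF der])
  then have "open (U \<inter> \<rho> -` {..<0})" by (rule continuous_open_preimage[OF _ U open_lessThan])
  moreover have "U \<inter> \<rho> -` {..<0} \<subseteq> \<Omega>"
    using local_C1_defining_mem_iff[OF D] by fastforce
  ultimately have sub: "U \<inter> \<rho> -` {..<0} \<subseteq> interior \<Omega>" by (simp add: interior_maximal)
  have "X \<in> \<Omega>" using assms(1,4) frontier_subset_closed by blast
  then have "\<rho> X \<le> 0" using local_C1_defining_mem_iff[OF D \<open>X \<in> U\<close>] by blast
  moreover assume "\<rho> X \<noteq> 0"
  ultimately have "X \<in> interior \<Omega>" using sub \<open>X \<in> U\<close> by auto
  then show False using \<open>X \<in> frontier \<Omega>\<close> by (simp add: frontier_def)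
qed

lemma eventually_positive_along_direction:
  fixes \<rho> :: "'a::real_inner \<Rightarrow> real"
  assumes "(\<rho> has_derivative (\<lambda>h. g \<bullet> h)) (at X)" "\<rho> X = 0" "g \<bullet> h > 0"
  shows "\<forall>\<^sub>F s in at_right 0. \<rho> (X + s *\<^sub>R h) > 0"
proof -
  have "((\<lambda>s. X + s *\<^sub>R h) has_derivative (\<lambda>s. s *\<^sub>R h)) (at 0)"
    by (auto intro!: derivative_eq_intros)
  from diff_chain_at[OF this, of \<rho> "\<lambda>h. g \<bullet> h"]
  have "((\<lambda>s. \<rho> (X + s *\<^sub>R h)) has_derivative (\<lambda>s. s * (g \<bullet> h))) (at 0)"
    using assms(1) by (simp add: o_def)
  then have "((\<lambda>s. \<rho> (X + s *\<^sub>R h)) has_real_derivative g \<bullet> h) (at 0)"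
    by (simp add: has_field_derivative_def mult_commute_abs)
  from DERIV_pos_inc_right[OF this assms(3)] show ?thesis
    using assms(2) by (simp add: eventually_at_right_field)
qed

lemma eventually_at_right_zero_witness:
  assumes "\<forall>\<^sub>F s in at_right (0::real). P s"
  obtains s where "0 < s" "s < 1" "P s"
proof -
  obtain b where "b > 0" "\<forall>s>0. s < b \<longrightarrow> P s"
    using assms by (auto simp: eventually_at_right_field)
  then show ?thesis by (intro that[of "min b 1 / 2"]) auto
qed

lemma eventually_ray_in_open:
  fixes X h :: "'a::real_normed_vector"
  assumes "open U" "X \<in> U"
  shows "\<forall>\<^sub>F s in at_right 0. X + s *\<^sub>R h \<in> U"
proof -
  have "((\<lambda>s. X + s *\<^sub>R h) \<longlongrightarrow> X + 0 *\<^sub>R h) (at_right 0)"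
    by (intro tendsto_intros)
  then show ?thesis using assms by (intro topological_tendstoD) auto
qed

lemma local_C1_defining_gradient_supports:
  assumes "convex \<Omega>" "closed \<Omega>" "X \<in> frontier \<Omega>"
    and D: "local_C1_defining \<Omega> U \<rho> G" "X \<in> U" and "Y \<in> \<Omega>"
  shows "G X \<bullet> (Y - X) \<le> 0"
proof (rule ccontr)
  have U: "open U" and der: "(\<rho> has_derivative (\<lambda>h. G X \<bullet> h)) (at X)"
    using D unfolding local_C1_defining_def by auto
  have X\<Omega>: "X \<in> \<Omega>" using assms(2,3) frontier_subset_closed by blast
  have \<rho>X: "\<rho> X = 0" using local_C1_defining_frontier_zero assms by blast
  assume "\<not> ?thesis"
  then have "\<forall>\<^sub>F s in at_right 0. \<rho> (X + s *\<^sub>R (Y - X)) > 0"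
    by (intro eventually_positive_along_direction[OF der \<rho>X]) simp
  then have "\<forall>\<^sub>F s in at_right 0. \<rho> (X + s *\<^sub>R (Y - X)) > 0 \<and> X + s *\<^sub>R (Y - X) \<in> U"
    using eventually_ray_in_open[OF U D(2)] by (rule eventually_conj)
  then obtain s where s: "0 < s" "s < 1" "\<rho> (X + s *\<^sub>R (Y - X)) > 0 \<and> X + s *\<^sub>R (Y - X) \<in> U"
    by (rule eventually_at_right_zero_witness)
  have "X + s *\<^sub>R (Y - X) = (1 - s) *\<^sub>R X + s *\<^sub>R Y" by (simp add: algebra_simps)
  then have "X + s *\<^sub>R (Y - X) \<in> \<Omega>" using convexD_alt[OF assms(1) X\<Omega> \<open>Y \<in> \<Omega>\<close>] s by auto
  then show False using s local_C1_defining_mem_iff[OF D(1)] by fastforce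
qed

text \<open>If v differs from the normalised gradient g, the direction h = v - g has g \<bullet> h < 0, so it
  decreases the defining function and points into \<Omega>, while v \<bullet> h > 0.\<close>
lemma local_C1_defining_unit_outer_normal_unique:
  assumes "closed \<Omega>" "X \<in> frontier \<Omega>"
    and D: "local_C1_defining \<Omega> U \<rho> G" "X \<in> U" and v: "unit_outer_normal \<Omega> X v"
  shows "v = G X /\<^sub>R norm (G X)"
proof (rule ccontr)
  have U: "open U" and der: "(\<rho> has_derivative (\<lambda>h. G X \<bullet> h)) (at X)" and GX: "G X \<noteq> 0"
    using D assms(2) unfolding local_C1_defining_def by auto
  have \<rho>X: "\<rho> X = 0" using local_C1_defining_frontier_zero assms by blast
  define g where "g = G X /\<^sub>R norm (G X)"
  define h where "h = v - g"
  assume "v \<noteq> G X /\<^sub>R norm (G X)"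
  then have "0 < (norm (v - g))\<^sup>2" by (simp add: g_def)
  moreover have unit: "norm v = 1" "norm g = 1" using v GX by (auto simp: unit_outer_normal_def g_def)
  ultimately have "v \<bullet> g < 1" using norm_diff_unit_vectors_sq[OF unit] by linarith
  moreover have "v \<bullet> v = 1" "g \<bullet> g = 1" using unit by (simp_all add: norm_eq_1)
  ultimately have vh: "v \<bullet> h > 0" and gh: "g \<bullet> h < 0"
    by (simp_all add: h_def inner_diff_right inner_commute[of g v])
  have "(-G X) \<bullet> h > 0" using gh GX by (simp add: g_def mult_less_0_iff)
  moreover have "((\<lambda>Y. - \<rho> Y) has_derivative (\<lambda>k. (- G X) \<bullet> k)) (at X)"
    using der by (auto intro!: derivative_eq_intros)
  ultimately have "\<forall>\<^sub>F s in at_right 0. - \<rho> (X + s *\<^sub>R h) > 0"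
    using eventually_positive_along_direction \<rho>X by fastforce
  then have "\<forall>\<^sub>F s in at_right 0. - \<rho> (X + s *\<^sub>R h) > 0 \<and> X + s *\<^sub>R h \<in> U"
    using eventually_ray_in_open[OF U D(2)] by (rule eventually_conj)
  then obtain s where s: "0 < s" "- \<rho> (X + s *\<^sub>R h) > 0 \<and> X + s *\<^sub>R h \<in> U"
    by (rule eventually_at_right_zero_witness)
  then have "X + s *\<^sub>R h \<in> \<Omega>" using local_C1_defining_mem_iff[OF D(1)] by fastforce
  then have "v \<bullet> ((X + s *\<^sub>R h) - X) \<le> 0" using v unfolding unit_outer_normal_def by blast
  then have "s * (v \<bullet> h) \<le> 0" by simp
  then show False using s vh by (simp add: mult_le_0_iff)
qed

lemma local_C1_defining_unit_outer_normal_iff: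
  assumes "convex \<Omega>" "closed \<Omega>" "X \<in> frontier \<Omega>"
    and D: "local_C1_defining \<Omega> U \<rho> G" "X \<in> U"
  shows "unit_outer_normal \<Omega> X v \<longleftrightarrow> v = G X /\<^sub>R norm (G X)"
proof -
  have "G X \<noteq> 0" using D assms(3) unfolding local_C1_defining_def by auto
  then show ?thesis
    using local_C1_defining_unit_outer_normal_unique[OF assms(2,3) D]
      local_C1_defining_gradient_supports[OF assms]
    by (auto simp: unit_outer_normal_def mult_nonneg_nonpos)
qed

lemma unit_outer_normal_iff_outward_normal:
  assumes "convex \<Omega>" "closed \<Omega>" "C1_boundary \<Omega>" "X \<in> frontier \<Omega>"
  shows "unit_outer_normal \<Omega> X v \<longleftrightarrow> v = outward_normal \<Omega> X"
proof -
  obtain U \<rho> G where D: "local_C1_defining \<Omega> U \<rho> G" "X \<in> U"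
    using assms(3,4) unfolding C1_boundary_def by blast
  note normal_iff = local_C1_defining_unit_outer_normal_iff[OF assms(1,2,4)]
  have "outward_normal \<Omega> X = G X /\<^sub>R norm (G X)"
    unfolding outward_normal_def
  proof (rule the_equality)
    fix \<nu> assume "\<exists>U' \<rho>' G'. X \<in> U' \<and> local_C1_defining \<Omega> U' \<rho>' G' \<and> \<nu> = G' X /\<^sub>R norm (G' X)"
    then obtain U' \<rho>' G' where D': "local_C1_defining \<Omega> U' \<rho>' G'" "X \<in> U'"
      and \<nu>: "\<nu> = G' X /\<^sub>R norm (G' X)"
      by blast
    have "unit_outer_normal \<Omega> X \<nu>" using normal_iff[OF D'] \<nu> by blast
    then show "\<nu> = G X /\<^sub>R norm (G X)" using normal_iff[OF D] by blast
  qed (use D in blast)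
  then show ?thesis using normal_iff[OF D] by simp
qed

lemma outward_normal_inner_gt:
  assumes "convex \<Omega>" "closed \<Omega>" "C1_boundary \<Omega>"
    and modulus: "normal_modulus \<Omega> r < sqrt (2 - 2 * \<Theta>)" and "\<Theta> < 1"
    and X: "X1 \<in> frontier \<Omega>" "X2 \<in> frontier \<Omega>" "norm (X1 - X2) < r"
  shows "outward_normal \<Omega> X1 \<bullet> outward_normal \<Omega> X2 > \<Theta>"
proof -
  let ?N = "outward_normal \<Omega>"
  have unit: "norm (?N X) = 1" if "X \<in> frontier \<Omega>" for X
    using unit_outer_normal_iff_outward_normal[OF assms(1-3) that, of "?N X"]
    unfolding unit_outer_normal_def by blast
  let ?A = "{norm (?N Y1 - ?N Y2) | Y1 Y2.
              Y1 \<in> frontier \<Omega> \<and> Y2 \<in> frontier \<Omega> \<and> norm (Y1 - Y2) < r}"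
  have "bdd_above ?A"
  proof (rule bdd_aboveI)
    fix d assume "d \<in> ?A"
    then obtain Y1 Y2 where "d = norm (?N Y1 - ?N Y2)" "Y1 \<in> frontier \<Omega>" "Y2 \<in> frontier \<Omega>"
      by blast
    then show "d \<le> 2" using unit norm_triangle_ineq4[of "?N Y1" "?N Y2"] by simp
  qed
  moreover have "norm (?N X1 - ?N X2) \<in> ?A" using X by blast
  ultimately have "norm (?N X1 - ?N X2) \<le> normal_modulus \<Omega> r"
    unfolding normal_modulus_def by (rule cSup_upper[rotated])
  then have "(norm (?N X1 - ?N X2))\<^sup>2 < (sqrt (2 - 2 * \<Theta>))\<^sup>2"
    using modulus by (intro power_strict_mono) auto
  then show ?thesis
    using norm_diff_unit_vectors_sq[OF unit[OF X(1)] unit[OF X(2)]] \<open>\<Theta> < 1\<close> by simp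
qed

lemma frontier_injective_linear_image:
  fixes f :: "'a::euclidean_space \<Rightarrow> 'a"
  assumes "linear f" "inj f"
  shows "frontier (f ` S) = f ` frontier S"
  using assms
  by (simp add: frontier_def closure_injective_linear_image[symmetric]
      interior_injective_linear_image image_set_diff)

lemma unit_outer_normal_orthogonal_image:
  assumes "orthogonal_transformation Q"
  shows "unit_outer_normal (Q ` S) (Q X) (Q v) \<longleftrightarrow> unit_outer_normal S X v"
proof -
  have lin: "linear Q" and inner: "\<And>a b. Q a \<bullet> Q b = a \<bullet> b"
    using assms unfolding orthogonal_transformation_def by auto
  have "Q v \<bullet> (Q Y - Q X) = v \<bullet> (Y - X)" for Y
    by (simp add: linear_diff[OF lin, symmetric] inner)
  then show ?thesis
    by (simp add: unit_outer_normal_def orthogonal_transformation_norm[OF assms])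
qed

lemma closest_point_unit_outer_normal:
  fixes S :: "'a::euclidean_space set"
  assumes "convex S" "closed S" "S \<noteq> {}" "Y \<notin> S"
  shows "closest_point S Y \<in> frontier S"
    and "unit_outer_normal S (closest_point S Y) (sgn (Y - closest_point S Y))"
proof -
  let ?Z = "closest_point S Y"
  have Z: "?Z \<in> S" by (rule closest_point_in_set[OF assms(2,3)])
  have "?Z \<notin> interior S"
  proof
    assume Z_int: "?Z \<in> interior S"
    then have "interior S \<noteq> {}" by blast
    then have "Y \<in> affine hull S" and "rel_interior S = interior S"
      by (simp_all add: affine_hull_nonempty_interior rel_interior_nonempty_interior)
    then have "Y \<in> rel_interior S"
      using closest_point_in_rel_interior[OF assms(2,3)] Z_int by blast
    then show False using assms(4) rel_interior_subset by blast
  qed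
  then show "?Z \<in> frontier S" using Z assms(2) by (simp add: frontier_def)
  have "Y - ?Z \<noteq> 0" using Z assms(4) by auto
  then show "unit_outer_normal S ?Z (sgn (Y - ?Z))"
    using closest_point_dot[OF assms(1,2)]
    by (simp add: unit_outer_normal_def norm_sgn sgn_div_norm mult_nonneg_nonpos)
qed

lemma top_of_vertical_section:
  fixes S :: "('a::real_normed_vector \<times> real) set"
  assumes "compact S" "(x, s) \<in> S"
  obtains t where "(x, t) \<in> frontier S" "\<And>t'. (x, t') \<in> S \<Longrightarrow> t' \<le> t"
proof -
  let ?T = "snd ` (S \<inter> {P. fst P = x})"
  have "closed {P :: 'a \<times> real. fst P = x}" by (intro closed_Collect_eq continuous_intros)
  then have "compact ?T"
    by (intro compact_continuous_image continuous_intros compact_Int_closed[OF assms(1)])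
  moreover have "s \<in> ?T" using assms(2) by force
  ultimately obtain t where "t \<in> ?T" and max: "\<forall>t'\<in>?T. t' \<le> t"
    using compact_attains_sup by blast
  then have xt: "(x, t) \<in> S" by force
  have top: "t' \<le> t" if "(x, t') \<in> S" for t'
    using max that by force
  have "(x, t) \<notin> interior S"
  proof
    assume "(x, t) \<in> interior S"
    then obtain e where "e > 0" "ball (x, t) e \<subseteq> S" using mem_interior by blast
    moreover have "(x, t + e / 2) \<in> ball (x, t) e"
      using \<open>e > 0\<close> by (simp add: dist_Pair_Pair dist_real_def)
    ultimately show False using top[of "t + e / 2"] by auto
  qed
  then have "(x, t) \<in> frontier S"
    using xt compact_imp_closed[OF assms(1)] by (simp add: frontier_def)
  then show thesis using that top by blast
qed

lemma inner_fst_lower_bound: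
  fixes v :: "'a::real_inner \<times> real"
  assumes "norm v < 2 * snd v"
  shows "- (sqrt 3 * snd v * norm w) \<le> fst v \<bullet> w"
proof -
  have pos: "0 < snd v" using assms norm_ge_zero[of v] by linarith
  have "(norm (fst v))\<^sup>2 + (snd v)\<^sup>2 = (norm v)\<^sup>2" by (cases v) (simp add: norm_Pair)
  moreover have "(norm v)\<^sup>2 < (2 * snd v)\<^sup>2" using assms by (intro power_strict_mono) auto
  ultimately have "(norm (fst v))\<^sup>2 \<le> 3 * (snd v)\<^sup>2" by (simp add: power_mult_distrib)
  then have "norm (fst v) \<le> sqrt (3 * (snd v)\<^sup>2)" by (rule real_le_rsqrt)
  also have "\<dots> = sqrt 3 * snd v" using pos by (simp add: real_sqrt_mult)
  finally have "norm (fst v) \<le> sqrt 3 * snd v" .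
  then have "norm (fst v) * norm w \<le> sqrt 3 * snd v * norm w" by (simp add: mult_right_mono)
  moreover have "- (fst v \<bullet> w) \<le> norm (fst v) * norm w"
    using Cauchy_Schwarz_ineq2[of "fst v" w] by linarith
  ultimately show ?thesis by linarith
qed

lemma norm_pair_diff_le_in_cone:
  fixes x x0 :: "'a::real_normed_vector"
  assumes "\<bar>t - t0\<bar> \<le> sqrt 3 * norm (x - x0)"
  shows "norm ((x, t) - (x0, t0)) \<le> 2 * norm (x - x0)"
proof -
  have "(t - t0)\<^sup>2 \<le> (sqrt 3 * norm (x - x0))\<^sup>2"
    using assms by (metis abs_ge_zero order_trans power2_abs power_mono)
  then have "(norm (x - x0))\<^sup>2 + (t - t0)\<^sup>2 \<le> (2 * norm (x - x0))\<^sup>2"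
    by (simp add: power_mult_distrib)
  then show ?thesis
    by (simp add: norm_Pair real_sqrt_le_iff real_le_lsqrt)
qed

locale locally_upward_normals =
  fixes S :: "('a::euclidean_space \<times> real) set" and \<nu> :: "'a \<times> real \<Rightarrow> 'a \<times> real"
    and P0 :: "'a \<times> real" and r :: real
  assumes compact: "compact S" and convex: "convex S"
    and normal_iff: "P \<in> frontier S \<Longrightarrow> unit_outer_normal S P v \<longleftrightarrow> v = \<nu> P"
    and P0: "P0 \<in> frontier S" and normal_P0: "\<nu> P0 = (0, 1)"
    and upward: "P \<in> frontier S \<Longrightarrow> norm (P - P0) < r \<Longrightarrow> 1/2 < snd (\<nu> P)"
begin

lemma closed: "closed S"
  using compact by (rule compact_imp_closed)

lemma frontier_mem: "P \<in> frontier S \<Longrightarrow> P \<in> S"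
  using closed frontier_subset_closed by blast

lemma normal_unit: "P \<in> frontier S \<Longrightarrow> norm (\<nu> P) = 1"
  using normal_iff[of P "\<nu> P"] unfolding unit_outer_normal_def by blast

lemma normal_supports: "P \<in> frontier S \<Longrightarrow> W \<in> S \<Longrightarrow> \<nu> P \<bullet> (W - P) \<le> 0"
  using normal_iff[of P "\<nu> P"] unfolding unit_outer_normal_def by blast

lemma snd_le_snd_P0: "W \<in> S \<Longrightarrow> snd W \<le> snd P0"
  using normal_supports[OF P0, of W] normal_P0 by (simp add: inner_prod_def)

lemma le_at_upward_point:
  assumes "(x, t) \<in> frontier S" "0 < snd (\<nu> (x, t))" "(x, t') \<in> S"
  shows "t' \<le> t"
proof -
  have "\<nu> (x, t) \<bullet> ((x, t') - (x, t)) \<le> 0" using normal_supports assms(1,3) by blast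
  then have "snd (\<nu> (x, t)) * (t' - t) \<le> 0" by (simp add: inner_prod_def)
  then show ?thesis using assms(2) by (simp add: mult_le_0_iff)
qed

lemma rise_le_sqrt3_run:
  assumes "(xa, ta) \<in> frontier S" "1/2 < snd (\<nu> (xa, ta))" "(xb, tb) \<in> S"
  shows "tb - ta \<le> sqrt 3 * norm (xb - xa)"
proof -
  let ?n = "\<nu> (xa, ta)"
  have "norm ?n < 2 * snd ?n" using normal_unit[OF assms(1)] assms(2) by simp
  then have "- (sqrt 3 * snd ?n * norm (xb - xa)) \<le> fst ?n \<bullet> (xb - xa)"
    by (rule inner_fst_lower_bound)
  moreover have "fst ?n \<bullet> (xb - xa) + snd ?n * (tb - ta) \<le> 0"
    using normal_supports[OF assms(1,3)] by (simp add: inner_prod_def)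
  ultimately have "snd ?n * (tb - ta) \<le> snd ?n * (sqrt 3 * norm (xb - xa))"
    by (simp add: algebra_simps)
  moreover have "0 < snd ?n" using assms(2) by simp
  ultimately show ?thesis by (simp add: mult_le_cancel_left_pos)
qed

text \<open>A cone point Y outside S would have a nearest point Z in S with normal Y - Z, which is
  steep since |Z - P0| \<le> |Y - P0| < r; but then P0 lies strictly beyond the supporting hyperplane
  at Z.\<close>
lemma cone_below_P0:
  assumes "norm (x - fst P0) < r / 2"
  shows "(x, snd P0 - sqrt 3 * norm (x - fst P0)) \<in> S"
proof (rule ccontr)
  define \<delta> where "\<delta> = norm (x - fst P0)"
  define Y where "Y = (x, snd P0 - sqrt 3 * \<delta>)"
  define Z where "Z = closest_point S Y"
  define d where "d = Y - Z"
  assume "(x, snd P0 - sqrt 3 * norm (x - fst P0)) \<notin> S"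
  then have "Y \<notin> S" by (simp add: Y_def \<delta>_def)
  moreover have ne: "S \<noteq> {}" using P0 frontier_mem by blast
  ultimately have Z: "Z \<in> frontier S" and "unit_outer_normal S Z (sgn d)"
    using closest_point_unit_outer_normal[OF convex closed] unfolding Z_def d_def by blast+
  then have \<nu>Z: "\<nu> Z = sgn d" using normal_iff[OF Z, of "sgn d"] by auto
  have "d \<noteq> 0" using \<open>Y \<notin> S\<close> frontier_mem[OF Z] by (auto simp: d_def)
  have "norm (Y - P0) \<le> 2 * \<delta>"
    using norm_pair_diff_le_in_cone[of "snd P0 - sqrt 3 * \<delta>" "snd P0" x "fst P0"]
    by (simp add: Y_def \<delta>_def)
  moreover have "dist Z P0 \<le> dist Y P0"
    using closest_point_lipschitz[OF convex closed ne, of Y P0]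
      closest_point_self[OF frontier_mem[OF P0]] by (simp add: Z_def)
  ultimately have "norm (Z - P0) < r" using assms unfolding dist_norm \<delta>_def by linarith
  then have "1/2 < snd (sgn d)" using upward[OF Z] \<nu>Z by simp
  then have "norm d < 2 * snd d" using \<open>d \<noteq> 0\<close> by (simp add: sgn_div_norm field_simps)
  then have "- (sqrt 3 * snd d * \<delta>) \<le> fst d \<bullet> (fst P0 - x)"
    using inner_fst_lower_bound[of d "fst P0 - x"] by (simp add: \<delta>_def norm_minus_commute)
  moreover have "d \<bullet> (P0 - Y) = fst d \<bullet> (fst P0 - x) + snd d * (sqrt 3 * \<delta>)"
    by (simp add: Y_def inner_prod_def)
  moreover have "d \<bullet> (P0 - Z) = d \<bullet> ((P0 - Y) + d)" by (simp add: d_def)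
  then have "d \<bullet> (P0 - Z) = d \<bullet> (P0 - Y) + d \<bullet> d" by (simp only: inner_add_right)
  moreover have "d \<bullet> (P0 - Z) \<le> 0"
    unfolding d_def Z_def by (rule closest_point_dot[OF convex closed frontier_mem[OF P0]])
  moreover have "0 < d \<bullet> d" using \<open>d \<noteq> 0\<close> by simp
  ultimately show False by (simp add: algebra_simps)
qed

lemma steep_at_top_point:
  assumes "norm (x - fst P0) < r / 2" "(x, t) \<in> frontier S" "\<And>t'. (x, t') \<in> S \<Longrightarrow> t' \<le> t"
  shows "1/2 < snd (\<nu> (x, t))"
proof -
  have "snd P0 - sqrt 3 * norm (x - fst P0) \<le> t" using assms(3) cone_below_P0[OF assms(1)] .
  moreover have "t \<le> snd P0" using snd_le_snd_P0 frontier_mem[OF assms(2)] by fastforce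
  ultimately have "\<bar>t - snd P0\<bar> \<le> sqrt 3 * norm (x - fst P0)" unfolding abs_le_iff by linarith
  then have "norm ((x, t) - P0) \<le> 2 * norm (x - fst P0)"
    using norm_pair_diff_le_in_cone[of t "snd P0" x "fst P0"] by simp
  then have "norm ((x, t) - P0) < r" using assms(1) by linarith
  then show ?thesis by (rule upward[OF assms(2)])
qed

lemma upward_point_exists:
  assumes "norm (x - fst P0) < r / 2"
  obtains t where "(x, t) \<in> frontier S" "1/2 < snd (\<nu> (x, t))"
proof -
  obtain t where "(x, t) \<in> frontier S" "\<And>t'. (x, t') \<in> S \<Longrightarrow> t' \<le> t"
    using top_of_vertical_section[OF compact cone_below_P0[OF assms]] by blast
  then show thesis using that steep_at_top_point[OF assms] by blast
qed

lemma upward_point_steep: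
  assumes "norm (x - fst P0) < r / 2" "(x, t) \<in> frontier S" "0 < snd (\<nu> (x, t))"
  shows "1/2 < snd (\<nu> (x, t))"
  using steep_at_top_point[OF assms(1,2)] le_at_upward_point[OF assms(2,3)] by blast

lemma upward_point_unique:
  assumes "(x, t) \<in> frontier S" "0 < snd (\<nu> (x, t))"
    and "(x, t') \<in> frontier S" "0 < snd (\<nu> (x, t'))"
  shows "t = t'"
  using le_at_upward_point[OF assms(1,2) frontier_mem[OF assms(3)]]
    le_at_upward_point[OF assms(3,4) frontier_mem[OF assms(1)]] by linarith

lemma diameter_bound_ge:
  assumes "0 < r" "\<forall>P\<in>S. \<forall>W\<in>S. dist P W \<le> D"
  shows "sqrt 3 * r / 4 \<le> D"
proof -
  obtain b :: 'a where "b \<in> Basis" using nonempty_Basis by blast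
  define x where "x = fst P0 + (r / 4) *\<^sub>R b"
  have nx: "norm (x - fst P0) = r / 4" using \<open>b \<in> Basis\<close> assms(1) by (simp add: x_def)
  then have "norm (x - fst P0) < r / 2" using assms(1) by simp
  from cone_below_P0[OF this] have "(x, snd P0 - sqrt 3 * (r / 4)) \<in> S" unfolding nx .
  then have "dist (snd P0 - sqrt 3 * (r / 4)) (snd P0) \<le> D"
    using assms(2) P0 frontier_mem dist_snd_le[of "(x, snd P0 - sqrt 3 * (r / 4))" P0]
    by fastforce
  then show ?thesis using assms(1) by (simp add: dist_real_def)
qed

lemma upward_graph_lipschitz:
  assumes "0 < r" and D: "\<forall>P\<in>S. \<forall>W\<in>S. dist P W \<le> D" and x1: "norm (x1 - fst P0) < r / 4"
    and P1: "(x1, t1) \<in> frontier S" "0 < snd (\<nu> (x1, t1))"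
    and P2: "(x2, t2) \<in> frontier S" "0 < snd (\<nu> (x2, t2))"
  shows "\<bar>t1 - t2\<bar> \<le> 4 * D / r * norm (x1 - x2)"
proof (cases "r / 4 \<le> norm (x1 - x2)")
  case True
  have "0 \<le> sqrt 3 * r / 4" using \<open>0 < r\<close> by simp
  then have "0 \<le> D" using diameter_bound_ge[OF \<open>0 < r\<close> D] by linarith
  then have "0 \<le> 4 * D / r" using \<open>0 < r\<close> by simp
  have "\<bar>t1 - t2\<bar> \<le> dist (x1, t1) (x2, t2)"
    using dist_snd_le[of "(x1, t1)" "(x2, t2)"] by (simp add: dist_real_def)
  also have "\<dots> \<le> D" using D P1(1) P2(1) frontier_mem by blast
  also have "\<dots> = 4 * D / r * (r / 4)" using \<open>0 < r\<close> by simp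
  also have "\<dots> \<le> 4 * D / r * norm (x1 - x2)"
    using True \<open>0 \<le> 4 * D / r\<close> by (rule mult_left_mono)
  finally show ?thesis .
next
  case False
  have "norm (x2 - fst P0) \<le> norm (x2 - x1) + norm (x1 - fst P0)"
    using norm_triangle_ineq[of "x2 - x1" "x1 - fst P0"] by simp
  then have x2: "norm (x2 - fst P0) < r / 2"
    using False x1 norm_minus_commute[of x2 x1] by linarith
  have x1': "norm (x1 - fst P0) < r / 2" using x1 \<open>0 < r\<close> by linarith
  have "t2 - t1 \<le> sqrt 3 * norm (x1 - x2)"
    using rise_le_sqrt3_run[OF P1(1) upward_point_steep[OF x1' P1] frontier_mem[OF P2(1)]]
    by (simp add: norm_minus_commute)
  moreover have "t1 - t2 \<le> sqrt 3 * norm (x1 - x2)"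
    by (rule rise_le_sqrt3_run[OF P2(1) upward_point_steep[OF x2 P2] frontier_mem[OF P1(1)]])
  ultimately have "\<bar>t1 - t2\<bar> \<le> sqrt 3 * norm (x1 - x2)"
    by (simp add: abs_le_iff)
  also have "\<dots> \<le> 4 * D / r * norm (x1 - x2)"
    using diameter_bound_ge[OF \<open>0 < r\<close> D] \<open>0 < r\<close>
    by (intro mult_right_mono) (simp_all add: field_simps)
  finally show ?thesis .
qed

end

lemma snd_orthogonal_transformation:
  assumes "orthogonal_transformation Q" "Q n = (0, 1)"
  shows "snd (Q v) = v \<bullet> n"
proof -
  have "snd (Q v) = Q v \<bullet> (0, 1)" by (simp add: inner_Pair_0)
  also have "\<dots> = v \<bullet> n"
    using assms unfolding orthogonal_transformation_def by metis
  finally show ?thesis .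
qed

lemma locally_upward_normals_rotation:
  fixes \<Omega> :: "('a::euclidean_space \<times> real) set" and Q :: "'a \<times> real \<Rightarrow> 'a \<times> real"
  assumes body: "convex_body \<Omega>" and C1: "C1_boundary \<Omega>"
    and \<Theta>: "1/2 \<le> \<Theta>" "\<Theta> < 1" and modulus: "normal_modulus \<Omega> r < sqrt (2 - 2 * \<Theta>)"
    and X0: "X0 \<in> frontier \<Omega>"
    and Q: "orthogonal_transformation Q" and QN: "Q (outward_normal \<Omega> X0) = (0, 1)"
  shows "locally_upward_normals (Q ` \<Omega>) (\<lambda>P. Q (outward_normal \<Omega> (inv Q P))) (Q X0) r"
proof -
  have "compact \<Omega>" and cv: "convex \<Omega>" using body unfolding convex_body_def by auto
  have cl: "closed \<Omega>" using \<open>compact \<Omega>\<close> by (rule compact_imp_closed)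
  have lin: "linear Q" and inj: "inj Q"
    using Q orthogonal_transformation_linear orthogonal_transformation_inj by blast+
  have inv: "inv Q (Q X) = X" for X using inj by (rule inv_f_f)
  have frontier: "frontier (Q ` \<Omega>) = Q ` frontier \<Omega>"
    by (rule frontier_injective_linear_image[OF lin inj])
  show ?thesis
  proof
    have "continuous_on \<Omega> Q"
      using lin by (intro linear_continuous_on) (simp add: linear_conv_bounded_linear)
    then show "compact (Q ` \<Omega>)" using \<open>compact \<Omega>\<close> by (rule compact_continuous_image)
    show "convex (Q ` \<Omega>)" by (rule convex_linear_image[OF lin cv])
  next
    fix P v assume "P \<in> frontier (Q ` \<Omega>)"
    then obtain X where X: "X \<in> frontier \<Omega>" "P = Q X" using frontier by auto
    obtain w where v: "v = Q w" using orthogonal_transformation_surj[OF Q] by (metis surjD)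
    show "unit_outer_normal (Q ` \<Omega>) P v \<longleftrightarrow> v = Q (outward_normal \<Omega> (inv Q P))"
      using unit_outer_normal_orthogonal_image[OF Q]
        unit_outer_normal_iff_outward_normal[OF cv cl C1 X(1)]
      by (simp add: X v inv inj_eq[OF inj])
  next
    show "Q X0 \<in> frontier (Q ` \<Omega>)" using frontier X0 by simp
    show "Q (outward_normal \<Omega> (inv Q (Q X0))) = (0, 1)" using QN by (simp add: inv)
  next
    fix P assume P: "P \<in> frontier (Q ` \<Omega>)" "norm (P - Q X0) < r"
    then obtain X where X: "X \<in> frontier \<Omega>" "P = Q X" using frontier by auto
    have "norm (X - X0) < r"
      using P(2) orthogonal_transformation_norm[OF Q, of "X - X0"]
      by (simp add: X(2) linear_diff[OF lin])
    then have "\<Theta> < outward_normal \<Omega> X \<bullet> outward_normal \<Omega> X0"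
      by (rule outward_normal_inner_gt[OF cv cl C1 modulus \<Theta>(2) X(1) X0])
    then show "1/2 < snd (Q (outward_normal \<Omega> (inv Q P)))"
      using \<Theta>(1) snd_orthogonal_transformation[OF Q QN] by (simp add: X(2) inv)
  qed
qed

lemma orthogonal_image_upper_boundary:
  fixes \<Omega> :: "('a::euclidean_space \<times> real) set" and Q :: "'a \<times> real \<Rightarrow> 'a \<times> real"
  assumes Q: "orthogonal_transformation Q" and QN: "Q (outward_normal \<Omega> X0) = (0, 1)"
  shows "Q ` upper_boundary \<Omega> X0
           = {P \<in> frontier (Q ` \<Omega>). 0 < snd (Q (outward_normal \<Omega> (inv Q P)))}"
proof -
  have inj: "inj Q" by (rule orthogonal_transformation_inj[OF Q])
  have "frontier (Q ` \<Omega>) = Q ` frontier \<Omega>"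
    using frontier_injective_linear_image orthogonal_transformation_linear[OF Q] inj by blast
  then show ?thesis
    unfolding upper_boundary_def
    by (auto simp: inv_f_f[OF inj] snd_orthogonal_transformation[OF Q QN])
qed

theorem lemma2p10:
  fixes \<Omega> :: "((real^'n) \<times> real) set"
    and Q :: "(real^'n) \<times> real \<Rightarrow> (real^'n) \<times> real"
    and \<Theta> r :: real
    and X0 :: "(real^'n) \<times> real"
  assumes body: "convex_body \<Omega>"
    and C1: "C1_boundary \<Omega>"
    and Theta: "1/2 \<le> \<Theta>" "\<Theta> < 1"
    and r_pos: "r > 0"
    and r_mod: "normal_modulus \<Omega> r < sqrt (2 - 2 * \<Theta>)"
    and X0: "X0 \<in> frontier \<Omega>"
    and Q: "orthogonal_transformation Q"
    and QN: "Q (outward_normal \<Omega> X0) = (0, 1)"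
  shows "\<forall>x1 \<in> ball (fst (Q X0)) (r / 4). \<forall>x2 \<in> proj_domain \<Omega> Q X0.
           \<bar>graph_fun \<Omega> Q X0 x1 - graph_fun \<Omega> Q X0 x2\<bar>
             \<le> 4 * diameter \<Omega> / r * norm (x1 - x2)"
proof (intro ballI)
  let ?\<nu> = "\<lambda>P. Q (outward_normal \<Omega> (inv Q P))"
  interpret locally_upward_normals "Q ` \<Omega>" ?\<nu> "Q X0" r
    by (rule locally_upward_normals_rotation[OF body C1 Theta r_mod X0 Q QN])
  note upper = orthogonal_image_upper_boundary[OF Q QN]
  have graph: "graph_fun \<Omega> Q X0 x = t"
    if "(x, t) \<in> frontier (Q ` \<Omega>)" "0 < snd (?\<nu> (x, t))" for x t
    unfolding graph_fun_def upper
    by (rule the_equality) (use that upward_point_unique in auto)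
  have "bounded \<Omega>" using body compact_imp_bounded unfolding convex_body_def by blast
  then have D: "\<forall>P\<in>Q ` \<Omega>. \<forall>W\<in>Q ` \<Omega>. dist P W \<le> diameter \<Omega>"
    using diameter_bounded_bound Q unfolding orthogonal_transformation_isometry by auto
  fix x1 x2 assume x1: "x1 \<in> ball (fst (Q X0)) (r / 4)" and "x2 \<in> proj_domain \<Omega> Q X0"
  then obtain P2 where P2: "P2 \<in> frontier (Q ` \<Omega>)" "0 < snd (?\<nu> P2)" "x2 = fst P2"
    unfolding proj_domain_def upper by blast
  have x1': "norm (x1 - fst (Q X0)) < r / 4" using x1 by (simp add: dist_norm norm_minus_commute)
  then obtain t1 where P1: "(x1, t1) \<in> frontier (Q ` \<Omega>)" "1/2 < snd (?\<nu> (x1, t1))"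
    using upward_point_exists[of x1] r_pos by force
  then show "\<bar>graph_fun \<Omega> Q X0 x1 - graph_fun \<Omega> Q X0 x2\<bar> \<le> 4 * diameter \<Omega> / r * norm (x1 - x2)"
    using upward_graph_lipschitz[OF r_pos D x1' P1(1) _, of x2 "snd P2"] P2
      graph[of x1 t1] graph[of x2 "snd P2"]
    by simp
qed

end
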